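(* Every componentwise polymatroidal monomial ideal $I\subset K[x_1,\ldots,x_n]$ satisfies the non-pure dual exchange property.
   Context: For a monomial $u$, $\deg_{x_i}(u)$ is the exponent of $x_i$ in $u$; $G(I)$ is the minimal monomial generating set. A monomial ideal generated in a single degree is polymatroidal if for all $u,v\in G(I)$ and all $i$ with $\deg_{x_i}(u)>\deg_{x_i}(v)$ there exists $j$ with $\deg_{x_j}(u)<\deg_{x_j}(v)$ and $x_j(u/x_i)\in I$. $I_{\langle j\rangle}$ denotes the ideal generated by all monomials of degree $j$ in $I$; $I$ is componentwise polymatroidal if every nonzero $I_{\langle j\rangle}$ is polymatroidal. A monomial ideal $I$ satisfies the non-pure dual exchange property if for all $u,v \in G(I)$ with $\deg(u) \leq \deg(v)$ and all $i$ with $\deg_{x_i}(v) < \deg_{x_i}(u)$, there exists $j$ with $\deg_{x_j}(v) > \deg_{x_j}(u)$ and $x_i(v/x_j) \in I$. *)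

theory Defs
  imports Main
begin

text \<open>Monomials in K[x_1,...,x_n] are represented by their exponent vectors
  u :: nat => nat, with u i = deg_{x_i}(u), supported on {1..n}.
  A monomial ideal I is represented by the set of monomials it contains
  (which is a K-basis of I); the coefficient field K plays no role.\<close>

definition monoms :: "nat \<Rightarrow> (nat \<Rightarrow> nat) set" where
  "monoms n = {u. \<forall>i. i \<notin> {1..n} \<longrightarrow> u i = 0}"

definition mdvd :: "(nat \<Rightarrow> nat) \<Rightarrow> (nat \<Rightarrow> nat) \<Rightarrow> bool" where
  "mdvd u v \<longleftrightarrow> (\<forall>i. u i \<le> v i)"

definition mdeg :: "nat \<Rightarrow> (nat \<Rightarrow> nat) \<Rightarrow> nat" where
  "mdeg n u = (\<Sum>i=1..n. u i)"

definition mono_ideal :: "nat \<Rightarrow> (nat \<Rightarrow> nat) set \<Rightarrow> bool" where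
  "mono_ideal n I \<longleftrightarrow> I \<subseteq> monoms n \<and>
     (\<forall>u\<in>I. \<forall>v\<in>monoms n. mdvd u v \<longrightarrow> v \<in> I)"

definition gens :: "(nat \<Rightarrow> nat) set \<Rightarrow> (nat \<Rightarrow> nat) set" where
  "gens I = {u \<in> I. \<forall>v\<in>I. mdvd v u \<longrightarrow> v = u}"

definition mshift :: "(nat \<Rightarrow> nat) \<Rightarrow> nat \<Rightarrow> nat \<Rightarrow> (nat \<Rightarrow> nat)" where
  "mshift u i j = (\<lambda>k. u k - (if k = i then 1 else 0) + (if k = j then 1 else 0))"

definition comp :: "nat \<Rightarrow> (nat \<Rightarrow> nat) set \<Rightarrow> nat \<Rightarrow> (nat \<Rightarrow> nat) set" where
  "comp n I d = {v \<in> monoms n. \<exists>u\<in>I. mdeg n u = d \<and> mdvd u v}"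

definition polymatroidal :: "nat \<Rightarrow> (nat \<Rightarrow> nat) set \<Rightarrow> bool" where
  "polymatroidal n I \<longleftrightarrow>
     (\<exists>d. \<forall>u\<in>gens I. mdeg n u = d) \<and>
     (\<forall>u\<in>gens I. \<forall>v\<in>gens I. \<forall>i\<in>{1..n}. u i > v i \<longrightarrow>
        (\<exists>j\<in>{1..n}. u j < v j \<and> mshift u i j \<in> I))"

definition componentwise_polymatroidal :: "nat \<Rightarrow> (nat \<Rightarrow> nat) set \<Rightarrow> bool" where
  "componentwise_polymatroidal n I \<longleftrightarrow>
     (\<forall>d. comp n I d \<noteq> {} \<longrightarrow> polymatroidal n (comp n I d))"

definition nonpure_dual_exchange :: "nat \<Rightarrow> (nat \<Rightarrow> nat) set \<Rightarrow> bool" where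
  "nonpure_dual_exchange n I \<longleftrightarrow>
     (\<forall>u\<in>gens I. \<forall>v\<in>gens I. mdeg n u \<le> mdeg n v \<longrightarrow>
       (\<forall>i\<in>{1..n}. v i < u i \<longrightarrow>
          (\<exists>j\<in>{1..n}. v j > u j \<and> mshift v j i \<in> I)))"

end

theory Submission
  imports Defs
begin

text \<open>Raise u \<in> G(I) to degree d = deg v by multiplying with a power of x_i; the degree d
  monomials of I form the bases of a discrete polymatroid (they are G(I_<d>)), and for those
  the exchange property implies the dual one. Applied to v and the raised u this gives
  j with v_j > u_j and x_i (v / x_j) \<in> I.\<close>

definition exchange_property :: "nat \<Rightarrow> (nat \<Rightarrow> nat) set \<Rightarrow> bool" where
  "exchange_property n B \<longleftrightarrow>
     (\<forall>u\<in>B. \<forall>v\<in>B. \<forall>i\<in>{1..n}. v i < u i \<longrightarrow> (\<exists>j\<in>{1..n}. u j < v j \<and> mshift u i j \<in> B))"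

definition deg_part :: "nat \<Rightarrow> (nat \<Rightarrow> nat) set \<Rightarrow> nat \<Rightarrow> (nat \<Rightarrow> nat) set" where
  "deg_part n I d = {u \<in> I. mdeg n u = d}"

lemma mdvd_trans: "mdvd u v \<Longrightarrow> mdvd v w \<Longrightarrow> mdvd u w"
  unfolding mdvd_def using le_trans by blast

lemma mdvd_antisym: "mdvd u v \<Longrightarrow> mdvd v u \<Longrightarrow> u = v"
  unfolding mdvd_def by (auto intro: antisym)

lemma mdvd_eq_if_mdeg_eq:
  assumes "u \<in> monoms n" "v \<in> monoms n" "mdvd u v" "mdeg n u = mdeg n v"
  shows "u = v"
proof (rule ccontr)
  assume "u \<noteq> v"
  then obtain k where k: "u k \<noteq> v k" by auto
  have le: "\<And>k. u k \<le> v k" using assms(3) by (simp add: mdvd_def)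
  have "k \<in> {1..n}"
  proof (rule ccontr)
    assume "k \<notin> {1..n}"
    then have "u k = 0" "v k = 0" using assms(1,2) unfolding monoms_def by blast+
    with k show False by simp
  qed
  moreover have "u k < v k" using k le[of k] by simp
  ultimately have "(\<Sum>i=1..n. u i) < (\<Sum>i=1..n. v i)"
    by (intro sum_strict_mono_ex1) (auto simp: le)
  then show False using assms(4) by (simp add: mdeg_def)
qed

lemma mshift_in_monoms: "u \<in> monoms n \<Longrightarrow> j \<in> {1..n} \<Longrightarrow> mshift u i j \<in> monoms n"
  unfolding monoms_def mshift_def by auto

lemma mdeg_mshift:
  assumes "0 < u i" "i \<in> {1..n}" "j \<in> {1..n}"
  shows "mdeg n (mshift u i j) = mdeg n u"
proof -
  have "mdeg n (mshift u i j) =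
      (\<Sum>k=1..n. u k - (if k = i then 1 else 0)) + (\<Sum>k=1..n. if k = j then 1 else 0)"
    unfolding mdeg_def mshift_def by (rule sum.distrib)
  also have "(\<Sum>k=1..n. u k - (if k = i then 1 else 0)) = (\<Sum>k=1..n. u k) - 1"
    using assms(1,2) by (subst sum_subtractf_nat) auto
  finally show ?thesis
    using assms member_le_sum[of i "{1..n}" u] unfolding mdeg_def by simp
qed

lemma mdeg_add_unit:
  assumes "i \<in> {1..n}"
  shows "mdeg n (\<lambda>k. u k + (if k = i then c else 0)) = mdeg n u + c"
  using assms unfolding mdeg_def by (simp add: sum.distrib)

lemma mshift_eq_if_single_excess:
  assumes "a \<in> monoms n" "b \<in> monoms n" "mdeg n a = mdeg n b" "i \<in> {1..n}"
    and "b i = a i + 1" and "\<And>k. k \<in> {1..n} \<Longrightarrow> k \<noteq> i \<Longrightarrow> b k \<le> a k"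
  shows "\<exists>j\<in>{1..n}. b j < a j \<and> b = mshift a j i"
proof -
  obtain j where j: "j \<in> {1..n}" "b j < a j"
  proof (rule ccontr)
    assume "\<not> thesis"
    then have "\<forall>k\<in>{1..n}. a k \<le> b k" using that by fastforce
    then have "(\<Sum>k=1..n. a k) < (\<Sum>k=1..n. b k)"
      using assms(4,5) by (intro sum_strict_mono_ex1) (auto intro!: bexI[of _ i])
    then show False using assms(3) by (simp add: mdeg_def)
  qed
  have "j \<noteq> i" using j assms(5) by auto
  have "b k \<le> mshift a j i k" for k
  proof (cases "k \<in> {1..n}")
    case True
    then show ?thesis
      using assms(5,6) j \<open>j \<noteq> i\<close> unfolding mshift_def by auto
  next
    case False
    then show ?thesis using assms(2) unfolding monoms_def by simp
  qed
  then have "mdvd b (mshift a j i)" unfolding mdvd_def by blast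
  moreover have "mdeg n (mshift a j i) = mdeg n b"
    using mdeg_mshift[of a j n i] j assms(3,4) by simp
  ultimately have "b = mshift a j i"
    using mdvd_eq_if_mdeg_eq assms(1,2,4) mshift_in_monoms by metis
  with j show ?thesis by blast
qed

text \<open>Induction on the distance from b down to a: while b exceeds a elsewhere, exchanging b
  in such a coordinate z brings it strictly closer to a without losing b_i > a_i.\<close>

lemma dual_exchange_if_exchange_property:
  assumes exch: "exchange_property n B" and "B \<subseteq> monoms n" and "\<forall>w\<in>B. mdeg n w = d"
    and "a \<in> B" "i \<in> {1..n}"
  shows "b \<in> B \<Longrightarrow> a i < b i \<Longrightarrow> \<exists>j\<in>{1..n}. b j < a j \<and> mshift a j i \<in> B"
proof (induction "\<Sum>k=1..n. b k - a k" arbitrary: b rule: less_induct)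
  case (less b)
  show ?case
  proof (cases "\<exists>z\<in>{1..n}. a z < b z \<and> (z \<noteq> i \<or> a i + 1 < b i)")
    case True
    then obtain z where z: "z \<in> {1..n}" "a z < b z" "z \<noteq> i \<or> a i + 1 < b i" by blast
    then obtain w where w: "w \<in> {1..n}" "b w < a w" and b'B: "mshift b z w \<in> B"
      using exch less.prems \<open>a \<in> B\<close> unfolding exchange_property_def by blast
    define b' where "b' = mshift b z w"
    have "z \<noteq> w" using z w by auto
    have b': "\<And>k. b' k = b k - (if k = z then 1 else 0) + (if k = w then 1 else 0)"
      unfolding b'_def mshift_def by simp
    have closer: "(\<Sum>k=1..n. b' k - a k) < (\<Sum>k=1..n. b k - a k)"
      using z w \<open>z \<noteq> w\<close> by (intro sum_strict_mono_ex1) (auto simp: b')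
    have "a i < b' i"
      using z w \<open>z \<noteq> w\<close> less.prems(2) by (auto simp: b')
    then obtain j where j: "j \<in> {1..n}" "b' j < a j" "mshift a j i \<in> B"
      using less.hyps[OF closer] b'B unfolding b'_def by blast
    then have "b j < a j"
      using z \<open>z \<noteq> w\<close> by (auto simp: b' split: if_splits)
    with j show ?thesis by blast
  next
    case False
    have "a \<in> monoms n" "b \<in> monoms n" "mdeg n a = mdeg n b"
      using assms less.prems(1) by auto
    then obtain j where "j \<in> {1..n}" "b j < a j" "b = mshift a j i"
      using mshift_eq_if_single_excess[of a n b i] False less.prems(2) \<open>i \<in> {1..n}\<close>
      by (metis Suc_eq_plus1 Suc_lessI not_le)
    with less.prems(1) show ?thesis by blast
  qed
qed

lemma mem_ideal_if_mem_comp: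
  assumes "mono_ideal n I" "x \<in> comp n I d" "mdeg n x = d"
  shows "x \<in> I"
proof -
  obtain y where "y \<in> I" "mdeg n y = d" "mdvd y x" "x \<in> monoms n"
    using assms(2) unfolding comp_def by auto
  moreover have "y \<in> monoms n" using assms(1) \<open>y \<in> I\<close> unfolding mono_ideal_def by auto
  ultimately show ?thesis using mdvd_eq_if_mdeg_eq assms(3) by metis
qed

lemma deg_part_subset_gens_comp:
  assumes "mono_ideal n I"
  shows "deg_part n I d \<subseteq> gens (comp n I d)"
proof
  fix w assume w: "w \<in> deg_part n I d"
  have wM: "w \<in> monoms n" using assms w unfolding mono_ideal_def deg_part_def by auto
  have "w \<in> comp n I d" using w wM unfolding deg_part_def comp_def by (auto simp: mdvd_def)
  moreover have "x = w" if x: "x \<in> comp n I d" "mdvd x w" for x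
  proof -
    obtain y where y: "y \<in> I" "mdeg n y = d" "mdvd y x"
      using x(1) unfolding comp_def by blast
    have "y \<in> monoms n" using assms y(1) unfolding mono_ideal_def by auto
    then have "y = w"
      using mdvd_eq_if_mdeg_eq[OF _ wM mdvd_trans[OF y(3) x(2)]] y(2) w
      unfolding deg_part_def by simp
    with y(3) x(2) show ?thesis by (simp add: mdvd_antisym)
  qed
  ultimately show "w \<in> gens (comp n I d)" unfolding gens_def by blast
qed

lemma exchange_property_deg_part:
  assumes "mono_ideal n I" "componentwise_polymatroidal n I"
  shows "exchange_property n (deg_part n I d)"
  unfolding exchange_property_def
proof (intro ballI impI)
  fix a b k
  assume a: "a \<in> deg_part n I d" and b: "b \<in> deg_part n I d" and "k \<in> {1..n}" "b k < a k"
  have gens: "a \<in> gens (comp n I d)" "b \<in> gens (comp n I d)"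
    using a b deg_part_subset_gens_comp[OF assms(1)] by auto
  then have "polymatroidal n (comp n I d)"
    using assms(2) unfolding componentwise_polymatroidal_def gens_def by blast
  then obtain j where j: "j \<in> {1..n}" "a j < b j" "mshift a k j \<in> comp n I d"
    using gens \<open>k \<in> {1..n}\<close> \<open>b k < a k\<close> unfolding polymatroidal_def by blast
  have "mdeg n (mshift a k j) = d"
    using mdeg_mshift[of a k n j] \<open>k \<in> {1..n}\<close> \<open>b k < a k\<close> j(1) a
    unfolding deg_part_def by simp
  then have "mshift a k j \<in> deg_part n I d"
    using mem_ideal_if_mem_comp[OF assms(1) j(3)] unfolding deg_part_def by simp
  with j show "\<exists>j\<in>{1..n}. a j < b j \<and> mshift a k j \<in> deg_part n I d" by blast
qed

theorem proposition1p5: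
  fixes n :: nat and I :: "(nat \<Rightarrow> nat) set"
  assumes "mono_ideal n I"
    and "componentwise_polymatroidal n I"
  shows "nonpure_dual_exchange n I"
  unfolding nonpure_dual_exchange_def
proof (intro ballI impI)
  fix u v i
  assume u: "u \<in> gens I" and v: "v \<in> gens I" and deg: "mdeg n u \<le> mdeg n v"
    and i: "i \<in> {1..n}" and "v i < u i"
  define B where "B = deg_part n I (mdeg n v)"
  define u' where "u' = (\<lambda>k. u k + (if k = i then mdeg n v - mdeg n u else 0))"
  have "u \<in> I" "v \<in> I" using u v unfolding gens_def by auto
  have "u' \<in> I"
    using assms(1) \<open>u \<in> I\<close> i unfolding mono_ideal_def monoms_def mdvd_def u'_def by auto
  then have u'B: "u' \<in> B"
    using mdeg_add_unit[OF i] deg unfolding B_def deg_part_def u'_def by simp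
  have "B \<subseteq> monoms n" using assms(1) unfolding B_def deg_part_def mono_ideal_def by auto
  moreover have "v \<in> B" using \<open>v \<in> I\<close> unfolding B_def deg_part_def by simp
  moreover have "v i < u' i" using \<open>v i < u i\<close> unfolding u'_def by simp
  ultimately obtain j where j: "j \<in> {1..n}" "u' j < v j" "mshift v j i \<in> B"
    using dual_exchange_if_exchange_property[OF exchange_property_deg_part[OF assms]]
      u'B i unfolding B_def deg_part_def by blast
  then have "u j < v j" unfolding u'_def by simp
  with j show "\<exists>j\<in>{1..n}. u j < v j \<and> mshift v j i \<in> I"
    unfolding B_def deg_part_def by auto
qed

end
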